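(* Let $k\ge 2$, let $G$ be a finite simple graph, and let $u,v\in V(G)$ satisfy $N(u)=N(v)$. Then in every closed neighborhood balanced $k$-coloring $c$ of $G$, $c(u)=c(v)$.
   Context: $N(v)=\{u : uv\in E(G)\}$ and $N[v]=N(v)\cup\{v\}$. A closed neighborhood balanced $k$-coloring of $G$ is a map $c: V(G)\to\{1,\dots,k\}$ such that for every vertex $v$ the numbers $|\{u\in N[v] : c(u)=i\}|$, $i=1,\dots,k$, are all equal. *)

theory Defs
  imports Main
begin

definition simple_graph :: "'a set \<Rightarrow> ('a \<Rightarrow> 'a \<Rightarrow> bool) \<Rightarrow> bool" where
  "simple_graph V E \<longleftrightarrow> finite V \<and> (\<forall>x y. E x y \<longrightarrow> E y x) \<and> (\<forall>x. \<not> E x x)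
     \<and> (\<forall>x y. E x y \<longrightarrow> x \<in> V \<and> y \<in> V)"

definition open_nbhd :: "'a set \<Rightarrow> ('a \<Rightarrow> 'a \<Rightarrow> bool) \<Rightarrow> 'a \<Rightarrow> 'a set" where
  "open_nbhd V E v = {u \<in> V. E u v}"

definition closed_nbhd :: "'a set \<Rightarrow> ('a \<Rightarrow> 'a \<Rightarrow> bool) \<Rightarrow> 'a \<Rightarrow> 'a set" where
  "closed_nbhd V E v = open_nbhd V E v \<union> {v}"

definition cnb_coloring :: "'a set \<Rightarrow> ('a \<Rightarrow> 'a \<Rightarrow> bool) \<Rightarrow> nat \<Rightarrow> ('a \<Rightarrow> nat) \<Rightarrow> bool" where
  "cnb_coloring V E k c \<longleftrightarrow> (\<forall>v\<in>V. c v \<in> {1..k}) \<and>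
     (\<forall>v\<in>V. \<forall>i\<in>{1..k}. \<forall>j\<in>{1..k}.
        card {u \<in> closed_nbhd V E v. c u = i} = card {u \<in> closed_nbhd V E v. c u = j})"

end

theory Submission
  imports Defs
begin

text \<open>Write \<open>N = N(u) = N(v)\<close>; neither \<open>u\<close> nor \<open>v\<close> lies in \<open>N\<close>, so \<open>N[u] = N + u\<close> and
\<open>N[v] = N + v\<close>. If \<open>c u \<noteq> c v\<close>, balance at \<open>u\<close> says that \<open>N\<close> has one vertex more of colour
\<open>c v\<close> than of colour \<open>c u\<close>, while balance at \<open>v\<close> says the opposite.\<close>

lemma finite_open_nbhd: "simple_graph V E \<Longrightarrow> finite (open_nbhd V E v)"
  unfolding simple_graph_def open_nbhd_def by auto

lemma not_in_open_nbhd: "simple_graph V E \<Longrightarrow> v \<notin> open_nbhd V E v"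
  unfolding simple_graph_def open_nbhd_def by auto

lemma closed_nbhd_eq_insert: "closed_nbhd V E v = insert v (open_nbhd V E v)"
  unfolding closed_nbhd_def by auto

lemma cnb_coloring_colour_counts_eq:
  assumes "cnb_coloring V E k c" "v \<in> V" "w \<in> V" "x \<in> V"
  shows "card {y \<in> closed_nbhd V E v. c y = c w} = card {y \<in> closed_nbhd V E v. c y = c x}"
  using assms unfolding cnb_coloring_def by blast

lemma card_colour_class_insert:
  assumes "finite N" "w \<notin> N"
  shows "card {x \<in> insert w N. c x = i} = card {x \<in> N. c x = i} + (if c w = i then 1 else 0)"
proof -
  have "{x \<in> insert w N. c x = i} = (if c w = i then insert w {x \<in> N. c x = i} else {x \<in> N. c x = i})"
    by auto
  then show ?thesis using assms by simp
qed

lemma balanced_insert_same_colour: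
  assumes "finite N" "u \<notin> N" "v \<notin> N"
    and "card {x \<in> insert u N. c x = c u} = card {x \<in> insert u N. c x = c v}"
    and "card {x \<in> insert v N. c x = c u} = card {x \<in> insert v N. c x = c v}"
  shows "c u = c v"
  using assms(4,5) unfolding card_colour_class_insert[OF assms(1,2)] card_colour_class_insert[OF assms(1,3)]
  by (auto split: if_splits)

theorem mainTheorem18:
  fixes V :: "'a set" and E :: "'a \<Rightarrow> 'a \<Rightarrow> bool" and k :: nat and u v :: 'a
    and c :: "'a \<Rightarrow> nat"
  assumes "k \<ge> 2"
    and "simple_graph V E"
    and "u \<in> V" and "v \<in> V"
    and "open_nbhd V E u = open_nbhd V E v"
    and "cnb_coloring V E k c"
  shows "c u = c v"
proof -
  let ?N = "open_nbhd V E u"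
  have N_u: "closed_nbhd V E u = insert u ?N" and N_v: "closed_nbhd V E v = insert v ?N"
    using assms(5) by (simp_all add: closed_nbhd_eq_insert)
  have "u \<notin> ?N" "v \<notin> ?N"
    using not_in_open_nbhd[OF assms(2), of u] not_in_open_nbhd[OF assms(2), of v] assms(5)
    by simp_all
  moreover have "card {x \<in> insert u ?N. c x = c u} = card {x \<in> insert u ?N. c x = c v}"
    using cnb_coloring_colour_counts_eq[OF assms(6,3,3,4)] by (simp only: N_u)
  moreover have "card {x \<in> insert v ?N. c x = c u} = card {x \<in> insert v ?N. c x = c v}"
    using cnb_coloring_colour_counts_eq[OF assms(6,4,3,4)] by (simp only: N_v)
  ultimately show ?thesis
    by (rule balanced_insert_same_colour[OF finite_open_nbhd[OF assms(2)]])
qed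

end
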